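(* Let $k$ be a field of characteristic zero, $m$ a positive integer and $i\in\mathbb{Z}_{\geqslant 0}$. Let $[x^m]$ be the differential ideal of $k\{x\}$ generated by $x^m$, and let $x_i$ be the $i$-th derivative of $x$. Then the minimal positive integer $j$ such that $x_i^j\in[x^m]$ equals $(i+1)m - i$.
   Context: $k\{x\}$ denotes the differential polynomial algebra in one indeterminate: the polynomial algebra $k[x_0,x_1,x_2,\dots]$ in algebraically independent indeterminates (with $x = x_0$) equipped with the $k$-linear derivation satisfying $x_n' = x_{n+1}$. A differential ideal is an ideal $I$ with $I'\subseteq I$; $[x^m]$ is the smallest differential ideal containing $x^m$. *)

theory Defs
  imports "HOL-Library.Poly_Mapping"
begin

text \<open>The differential polynomial algebra k{x} in one indeterminate: polynomials in the
  countably many indeterminates x_0, x_1, x_2, ... (x = x_0).\<close>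

type_synonym 'a dpoly = "(nat \<Rightarrow>\<^sub>0 nat) \<Rightarrow>\<^sub>0 'a"

definition dvar :: "nat \<Rightarrow> 'a::comm_ring_1 dpoly" where
  "dvar n = Poly_Mapping.single (Poly_Mapping.single n 1) 1"

text \<open>The k-linear derivation with x_n' = x_(n+1), extended by the Leibniz rule:
  (c * prod x_n^(e_n))' = sum_n c * e_n * x_n^(e_n - 1) * x_(n+1) * prod_(l /= n) x_l^(e_l).\<close>

definition dderiv :: "'a::comm_ring_1 dpoly \<Rightarrow> 'a dpoly" where
  "dderiv p = (\<Sum>mon\<in>Poly_Mapping.keys p. \<Sum>n\<in>Poly_Mapping.keys mon.
      Poly_Mapping.single (mon - Poly_Mapping.single n 1 + Poly_Mapping.single (Suc n) 1)
        (Poly_Mapping.lookup p mon * of_nat (Poly_Mapping.lookup mon n)))"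

definition is_diff_ideal :: "'a::comm_ring_1 dpoly set \<Rightarrow> bool" where
  "is_diff_ideal I \<longleftrightarrow> 0 \<in> I \<and> (\<forall>p\<in>I. \<forall>q\<in>I. p + q \<in> I)
     \<and> (\<forall>p\<in>I. \<forall>r. r * p \<in> I) \<and> (\<forall>p\<in>I. dderiv p \<in> I)"

definition diff_ideal_gen :: "'a::comm_ring_1 dpoly set \<Rightarrow> 'a dpoly set" where
  "diff_ideal_gen S = \<Inter>{I. is_diff_ideal I \<and> S \<subseteq> I}"

end

theory Submission
  imports Defs "Jordan_Normal_Form.Determinant"
begin

text \<open>Write a monomial as an exponent vector \<open>e\<close>, with degree \<open>\<Sum> e\<^sub>k\<close> and weight \<open>\<Sum> k e\<^sub>k\<close>.

  Membership: the \<open>n\<close>-th derivative of \<open>x\<^sup>m\<close> is a combination, with positive integer coefficients,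
  of all monomials of degree \<open>m\<close> and weight \<open>n\<close>.  A monomial of degree \<open>N = (i + 1)(m - 1) + 1\<close> and
  weight \<open>i N\<close> (such as \<open>x\<^sub>i\<^sup>N\<close>) has at least \<open>m\<close> factors among some two consecutive variables
  \<open>x\<^sub>b, x\<^sub>b\<^sub>+\<^sub>1\<close>, i.e. it is divisible by a compressed monomial \<open>S = x\<^sub>b\<^sup>p x\<^sub>b\<^sub>+\<^sub>1\<^sup>q\<close> of degree \<open>m\<close>.  Among the
  monomials of the relevant derivative of \<open>x\<^sup>m\<close>, \<open>S\<close> uniquely minimises \<open>\<Sum> k\<^sup>2 e\<^sub>k\<close>, so a descending
  induction on this quantity puts every such monomial into \<open>[x\<^sup>m]\<close>; characteristic zero is needed to
  divide by the coefficient of \<open>S\<close>.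

  Non-membership: the pairing \<open>\<langle>x\<^sup>e, x\<^sup>f\<rangle> = [e = f] \<Prod> e\<^sub>k!\<close> makes the derivation \<open>x\<^sub>n \<mapsto> x\<^sub>n\<^sub>-\<^sub>1\<close>
  adjoint to differentiation, so for \<open>F\<close> in its kernel the annihilator of \<open>F\<close> is a differential ideal.
  The Hankel determinant \<open>H = det (r + c)! x\<^sub>r\<^sub>+\<^sub>c\<close> of order \<open>i + 1\<close> lies in that kernel, each of its
  monomials contains \<open>x\<^sub>0\<close> at most once, and it contains \<open>x\<^sub>i\<^sup>i\<^sup>+\<^sup>1\<close>.  The annihilator of \<open>H\<^sup>m\<^sup>-\<^sup>1\<close>
  therefore contains \<open>x\<^sup>m\<close> but not \<open>x\<^sub>i\<^sup>N\<^sup>-\<^sup>1\<close>.\<close>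

lemma poly_mapping_sum_single:
  "p = (\<Sum>k\<in>Poly_Mapping.keys p. Poly_Mapping.single k (Poly_Mapping.lookup p k))"
proof (rule poly_mapping_eqI)
  fix k
  show "Poly_Mapping.lookup p k
      = Poly_Mapping.lookup (\<Sum>k\<in>Poly_Mapping.keys p. Poly_Mapping.single k (Poly_Mapping.lookup p k)) k"
    by (cases "k \<in> Poly_Mapping.keys p") (auto simp: lookup_sum lookup_single when_def in_keys_iff)
qed

lemma poly_mapping_induct [case_names zero add single]:
  fixes p :: "'a \<Rightarrow>\<^sub>0 'b::comm_monoid_add"
  assumes "P 0" "\<And>p q. P p \<Longrightarrow> P q \<Longrightarrow> P (p + q)" "\<And>k v. P (Poly_Mapping.single k v)"
  shows "P p"
proof -
  have "P (\<Sum>k\<in>A. Poly_Mapping.single k (f k))" if "finite A" for A f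
    using that by (induction A rule: finite_induct) (auto intro: assms)
  then show ?thesis by (subst poly_mapping_sum_single) simp
qed

abbreviation unit_exp :: "nat \<Rightarrow> nat \<Rightarrow>\<^sub>0 nat" where
  "unit_exp n \<equiv> Poly_Mapping.single n 1"

abbreviation mon :: "(nat \<Rightarrow>\<^sub>0 nat) \<Rightarrow> 'a::comm_ring_1 dpoly" where
  "mon e \<equiv> Poly_Mapping.single e 1"

text \<open>Move one unit of the exponent of \<open>x\<^sub>n\<close> to \<open>x\<^sub>k\<close>; meaningful when \<open>x\<^sub>n\<close> occurs in \<open>e\<close>
  (otherwise the truncated subtraction makes it just add \<open>x\<^sub>k\<close>).\<close>
abbreviation move_exp :: "(nat \<Rightarrow>\<^sub>0 nat) \<Rightarrow> nat \<Rightarrow> nat \<Rightarrow> nat \<Rightarrow>\<^sub>0 nat" where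
  "move_exp e n k \<equiv> e - unit_exp n + unit_exp k"

lemma move_exp_inverse:
  assumes "Poly_Mapping.lookup e n \<noteq> 0"
  shows "move_exp (move_exp e n k) k n = e"
  by (rule poly_mapping_eqI) (use assms in \<open>auto simp: lookup_add lookup_minus lookup_single when_def\<close>)

lemma single_move_mult:
  fixes a b c :: "'a::comm_ring_1"
  shows "Poly_Mapping.single (e + f - unit_exp n + t) (a * b * of_nat (Poly_Mapping.lookup e n) * c)
     = Poly_Mapping.single (e - unit_exp n + t) (a * of_nat (Poly_Mapping.lookup e n) * c)
       * Poly_Mapping.single f b"
proof (cases "Poly_Mapping.lookup e n = 0")
  case False
  then have "e + f - unit_exp n + t = (e - unit_exp n + t) + f"
    by (intro poly_mapping_eqI) (auto simp: lookup_add lookup_minus lookup_single when_def)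
  then show ?thesis by (simp add: mult_single mult_ac add.commute)
qed simp

lemma keys_add_exp:
  "Poly_Mapping.keys (e + f :: nat \<Rightarrow>\<^sub>0 nat) = Poly_Mapping.keys e \<union> Poly_Mapping.keys f"
  by (auto simp: in_keys_iff lookup_add)

lemma dvar_power: "(dvar n :: 'a::comm_ring_1 dpoly) ^ k = mon (Poly_Mapping.single n k)"
  by (induction k) (simp_all add: dvar_def mult_single single_add[symmetric])

lemma sum_keys_extend:
  fixes e :: "nat \<Rightarrow>\<^sub>0 nat"
  assumes "finite K" "Poly_Mapping.keys e \<subseteq> K"
    and "\<And>n. n \<in> K \<Longrightarrow> Poly_Mapping.lookup e n = 0 \<Longrightarrow> g n = 0"
  shows "(\<Sum>n\<in>Poly_Mapping.keys e. g n) = (\<Sum>n\<in>K. g n)"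
  by (rule sum.mono_neutral_left) (use assms in \<open>auto simp: in_keys_iff\<close>)

definition wdeg :: "(nat \<Rightarrow> nat) \<Rightarrow> (nat \<Rightarrow>\<^sub>0 nat) \<Rightarrow> nat" where
  "wdeg h e = (\<Sum>k\<in>Poly_Mapping.keys e. h k * Poly_Mapping.lookup e k)"

abbreviation "tdeg \<equiv> wdeg (\<lambda>_. 1)"
abbreviation "weight \<equiv> wdeg (\<lambda>k. k)"
abbreviation "sq_weight \<equiv> wdeg (\<lambda>k. k * k)"

lemma wdeg_add: "wdeg h (e + f) = wdeg h e + wdeg h f"
  unfolding wdeg_def by (rule setsum_keys_plus_distrib) (auto simp: distrib_left)

lemma wdeg_single [simp]: "wdeg h (Poly_Mapping.single k n) = h k * n"
  by (cases "n = 0") (auto simp: wdeg_def)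

lemma wdeg_zero [simp]: "wdeg h 0 = 0"
  by (simp add: wdeg_def)

lemma wdeg_sum: "wdeg h (sum f A) = (\<Sum>a\<in>A. wdeg h (f a))"
  by (induction A rule: infinite_finite_induct) (auto simp: wdeg_add)

lemma wdeg_extend:
  assumes "finite K" "Poly_Mapping.keys e \<subseteq> K"
  shows "wdeg h e = (\<Sum>k\<in>K. h k * Poly_Mapping.lookup e k)"
  unfolding wdeg_def by (rule sum_keys_extend) (use assms in auto)

lemma wdeg_move_exp:
  assumes "Poly_Mapping.lookup e n \<noteq> 0"
  shows "wdeg h (move_exp e n k) + h n = wdeg h e + h k"
proof -
  have "e = (e - unit_exp n) + unit_exp n"
    by (rule poly_mapping_eqI) (use assms in \<open>auto simp: lookup_add lookup_minus lookup_single when_def\<close>)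
  then have "wdeg h e = wdeg h (e - unit_exp n) + h n"
    by (metis wdeg_add wdeg_single mult_1_right)
  then show ?thesis by (simp add: wdeg_add)
qed

lemma exp_eq_single_if_keys_subset:
  assumes "Poly_Mapping.keys e \<subseteq> {i}"
  shows "e = Poly_Mapping.single i (tdeg e)"
proof -
  have "tdeg e = Poly_Mapping.lookup e i" using wdeg_extend[of "{i}" e] assms by simp
  then show ?thesis
    by (intro poly_mapping_eqI) (use assms in \<open>auto simp: lookup_single when_def in_keys_iff\<close>)
qed

lemma exp_eq_single_0_if_weight_0:
  assumes "weight e = 0"
  shows "e = Poly_Mapping.single 0 (tdeg e)"
proof (rule exp_eq_single_if_keys_subset, rule subsetI)
  fix k assume k: "k \<in> Poly_Mapping.keys e"
  have "k * Poly_Mapping.lookup e k \<le> weight e"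
    unfolding wdeg_def by (rule member_le_sum) (use k in auto)
  with k assms show "k \<in> {0}" by (auto simp: in_keys_iff)
qed

section \<open>Derivations of monomial type\<close>

definition mon_derivation ::
  "(nat \<Rightarrow> (nat \<Rightarrow>\<^sub>0 nat)) \<Rightarrow> (nat \<Rightarrow> 'a) \<Rightarrow> 'a::comm_ring_1 dpoly \<Rightarrow> 'a dpoly" where
  "mon_derivation s w p = (\<Sum>e\<in>Poly_Mapping.keys p. \<Sum>n\<in>Poly_Mapping.keys e.
      Poly_Mapping.single (e - unit_exp n + s n)
        (Poly_Mapping.lookup p e * of_nat (Poly_Mapping.lookup e n) * w n))"

lemma dderiv_eq_mon_derivation: "dderiv = mon_derivation (\<lambda>n. unit_exp (Suc n)) (\<lambda>_. 1)"
  by (rule ext) (simp add: dderiv_def mon_derivation_def)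

context
  fixes s :: "nat \<Rightarrow> (nat \<Rightarrow>\<^sub>0 nat)" and w :: "nat \<Rightarrow> 'a::comm_ring_1"
begin

lemma mon_derivation_add: "mon_derivation s w (p + q) = mon_derivation s w p + mon_derivation s w q"
  unfolding mon_derivation_def
  by (rule setsum_keys_plus_distrib) (auto simp: distrib_right single_add sum.distrib)

lemma mon_derivation_zero [simp]: "mon_derivation s w 0 = 0"
  by (simp add: mon_derivation_def)

lemma mon_derivation_single:
  "mon_derivation s w (Poly_Mapping.single e c) = (\<Sum>n\<in>Poly_Mapping.keys e.
      Poly_Mapping.single (e - unit_exp n + s n) (c * of_nat (Poly_Mapping.lookup e n) * w n))"
  by (cases "c = 0") (simp_all add: mon_derivation_def)

lemma mon_derivation_const [simp]: "mon_derivation s w (Poly_Mapping.single 0 c) = 0"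
  by (simp add: mon_derivation_single)

lemma mon_derivation_one [simp]: "mon_derivation s w 1 = 0"
  using mon_derivation_const[of 1] by simp

lemma mon_derivation_of_nat [simp]: "mon_derivation s w (of_nat k) = 0"
  by (metis mon_derivation_const single_of_nat)

lemma mon_derivation_of_int [simp]: "mon_derivation s w (of_int k) = 0"
  by (metis mon_derivation_const single_of_int)

lemma mon_derivation_sum: "mon_derivation s w (sum f A) = (\<Sum>a\<in>A. mon_derivation s w (f a))"
  by (induction A rule: infinite_finite_induct) (auto simp: mon_derivation_add)

lemma mon_derivation_mult_single:
  "mon_derivation s w (Poly_Mapping.single e a * Poly_Mapping.single f b)
     = mon_derivation s w (Poly_Mapping.single e a) * Poly_Mapping.single f b
       + Poly_Mapping.single e a * mon_derivation s w (Poly_Mapping.single f b)"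
proof -
  let ?K = "Poly_Mapping.keys e \<union> Poly_Mapping.keys f"
  let ?de = "\<lambda>n. Poly_Mapping.single (e - unit_exp n + s n) (a * of_nat (Poly_Mapping.lookup e n) * w n)"
  let ?df = "\<lambda>n. Poly_Mapping.single (f - unit_exp n + s n) (b * of_nat (Poly_Mapping.lookup f n) * w n)"
  have "mon_derivation s w (Poly_Mapping.single e a * Poly_Mapping.single f b) =
     (\<Sum>n\<in>?K. Poly_Mapping.single (e + f - unit_exp n + s n)
        (a * b * of_nat (Poly_Mapping.lookup (e + f) n) * w n))"
    unfolding mult_single mon_derivation_single
    by (rule sum_keys_extend) (auto simp: keys_add_exp lookup_add)
  also have "\<dots> = (\<Sum>n\<in>?K. ?de n * Poly_Mapping.single f b + Poly_Mapping.single e a * ?df n)"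
  proof (rule sum.cong[OF refl])
    fix n
    have "Poly_Mapping.single (e + f - unit_exp n + s n) (a * b * of_nat (Poly_Mapping.lookup e n) * w n)
        = ?de n * Poly_Mapping.single f b"
      by (rule single_move_mult)
    moreover have "Poly_Mapping.single (e + f - unit_exp n + s n) (a * b * of_nat (Poly_Mapping.lookup f n) * w n)
        = Poly_Mapping.single e a * ?df n"
      using single_move_mult[of f e n "s n" b a "w n"] by (simp add: add.commute mult_ac)
    ultimately show "Poly_Mapping.single (e + f - unit_exp n + s n)
        (a * b * of_nat (Poly_Mapping.lookup (e + f) n) * w n)
        = ?de n * Poly_Mapping.single f b + Poly_Mapping.single e a * ?df n"
      by (simp add: lookup_add distrib_left distrib_right single_add)
  qed
  also have "\<dots> = (\<Sum>n\<in>Poly_Mapping.keys e. ?de n) * Poly_Mapping.single f b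
      + Poly_Mapping.single e a * (\<Sum>n\<in>Poly_Mapping.keys f. ?df n)"
  proof -
    have "(\<Sum>n\<in>Poly_Mapping.keys e. ?de n * Poly_Mapping.single f b)
        = (\<Sum>n\<in>?K. ?de n * Poly_Mapping.single f b)"
      by (rule sum_keys_extend) auto
    moreover have "(\<Sum>n\<in>Poly_Mapping.keys f. Poly_Mapping.single e a * ?df n)
        = (\<Sum>n\<in>?K. Poly_Mapping.single e a * ?df n)"
      by (rule sum_keys_extend) auto
    ultimately show ?thesis by (simp add: sum.distrib sum_distrib_left sum_distrib_right)
  qed
  finally show ?thesis by (simp add: mon_derivation_single)
qed

lemma mon_derivation_mult:
  "mon_derivation s w (p * q) = mon_derivation s w p * q + p * mon_derivation s w q"
proof (induction p rule: poly_mapping_induct)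
  case (single e a)
  show ?case
    by (induction q rule: poly_mapping_induct)
      (simp_all add: distrib_left distrib_right mon_derivation_add mon_derivation_mult_single)
qed (simp_all add: distrib_right mon_derivation_add)

lemma mon_derivation_of_nat_mult: "mon_derivation s w (of_nat k * p) = of_nat k * mon_derivation s w p"
  by (simp add: mon_derivation_mult)

lemma mon_derivation_power:
  "mon_derivation s w (p ^ Suc k) = of_nat (Suc k) * p ^ k * mon_derivation s w p"
  by (induction k) (simp_all add: mon_derivation_mult algebra_simps)

lemma mon_derivation_prod:
  "finite A \<Longrightarrow> mon_derivation s w (\<Prod>r\<in>A. f r)
     = (\<Sum>r\<in>A. mon_derivation s w (f r) * (\<Prod>r'\<in>A - {r}. f r'))"
proof (induction A rule: finite_induct)
  case (insert x A)
  have "(\<Sum>r\<in>A. mon_derivation s w (f r) * (f x * (\<Prod>r'\<in>A - {r}. f r')))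
      = (\<Sum>r\<in>A. mon_derivation s w (f r) * (\<Prod>r'\<in>insert x A - {r}. f r'))"
    by (rule sum.cong[OF refl]) (use insert in \<open>auto simp: insert_Diff_if\<close>)
  with insert show ?case
    by (simp add: mon_derivation_mult sum_distrib_left algebra_simps insert_Diff_if)
qed simp

end

context
  fixes I :: "'a::comm_ring_1 dpoly set"
  assumes I: "is_diff_ideal I"
begin

lemma diff_ideal_zero: "0 \<in> I"
  using I by (simp add: is_diff_ideal_def)

lemma diff_ideal_add: "p \<in> I \<Longrightarrow> q \<in> I \<Longrightarrow> p + q \<in> I"
  using I by (simp add: is_diff_ideal_def)

lemma diff_ideal_mult: "p \<in> I \<Longrightarrow> r * p \<in> I"
  using I by (simp add: is_diff_ideal_def)

lemma diff_ideal_diff: "p \<in> I \<Longrightarrow> q \<in> I \<Longrightarrow> p - q \<in> I"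
  using diff_ideal_add[of p "(-1) * q"] diff_ideal_mult[of q "-1"] by simp

lemma diff_ideal_sum: "(\<And>a. a \<in> A \<Longrightarrow> f a \<in> I) \<Longrightarrow> sum f A \<in> I"
  by (induction A rule: infinite_finite_induct) (auto intro: diff_ideal_zero diff_ideal_add)

lemma diff_ideal_dderiv_iter: "p \<in> I \<Longrightarrow> (dderiv ^^ n) p \<in> I"
  using I by (induction n) (auto simp: is_diff_ideal_def)

end

section \<open>Powers of \<open>x\<^sub>i\<close> in \<open>[x\<^sup>m]\<close>\<close>

lemma lookup_dderiv:
  "Poly_Mapping.lookup (dderiv p) T = (\<Sum>e\<in>Poly_Mapping.keys p. \<Sum>n\<in>Poly_Mapping.keys e.
     (Poly_Mapping.lookup p e * of_nat (Poly_Mapping.lookup e n) when move_exp e n (Suc n) = T))"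
  by (simp add: dderiv_def lookup_sum lookup_single)

lemma keys_dderiv:
  assumes "T \<in> Poly_Mapping.keys (dderiv p)"
  obtains e n where "e \<in> Poly_Mapping.keys p" "n \<in> Poly_Mapping.keys e" "T = move_exp e n (Suc n)"
proof -
  have "Poly_Mapping.lookup (dderiv p) T \<noteq> 0" using assms by (simp add: in_keys_iff)
  then obtain e where e: "e \<in> Poly_Mapping.keys p" and "(\<Sum>n\<in>Poly_Mapping.keys e.
      (Poly_Mapping.lookup p e * of_nat (Poly_Mapping.lookup e n) when move_exp e n (Suc n) = T)) \<noteq> 0"
    unfolding lookup_dderiv by (blast elim: sum.not_neutral_contains_not_neutral)
  then obtain n where "n \<in> Poly_Mapping.keys e"
    and "(Poly_Mapping.lookup p e * of_nat (Poly_Mapping.lookup e n) when move_exp e n (Suc n) = T) \<noteq> 0"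
    by (blast elim: sum.not_neutral_contains_not_neutral)
  with e that show ?thesis by (simp add: when_def split: if_splits)
qed

definition power_deriv :: "nat \<Rightarrow> nat \<Rightarrow> 'a::comm_ring_1 dpoly" where
  "power_deriv m n = (dderiv ^^ n) (mon (Poly_Mapping.single 0 m))"

lemma power_deriv_Suc: "power_deriv m (Suc n) = dderiv (power_deriv m n)"
  by (simp add: power_deriv_def)

lemma keys_power_deriv:
  "T \<in> Poly_Mapping.keys (power_deriv m n :: 'a::comm_ring_1 dpoly) \<Longrightarrow> tdeg T = m \<and> weight T = n"
proof (induction n arbitrary: T)
  case 0
  then show ?case by (simp add: power_deriv_def split: if_splits)
next
  case (Suc n)
  then have "T \<in> Poly_Mapping.keys (dderiv (power_deriv m n :: 'a dpoly))"
    by (simp add: power_deriv_Suc)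
  then obtain e k where e: "e \<in> Poly_Mapping.keys (power_deriv m n :: 'a dpoly)"
    and k: "k \<in> Poly_Mapping.keys e" and T: "T = move_exp e k (Suc k)"
    by (rule keys_dderiv)
  have "Poly_Mapping.lookup e k \<noteq> 0" using k by (simp add: in_keys_iff)
  with Suc.IH[OF e] T show ?case
    using wdeg_move_exp[of e k "\<lambda>_. 1" "Suc k"] wdeg_move_exp[of e k "\<lambda>k. k" "Suc k"] by simp
qed

lemma weight_Suc_obtain_move_exp:
  assumes "weight T = Suc n"
  obtains j T' where "Poly_Mapping.lookup T' j \<noteq> 0" "T = move_exp T' j (Suc j)"
    "tdeg T' = tdeg T" "weight T' = n"
proof -
  obtain j where j: "j \<in> Poly_Mapping.keys T" "0 < j"
  proof (rule ccontr)
    assume "\<not> thesis"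
    with that have "weight T = 0" unfolding wdeg_def by (intro sum.neutral) auto
    with assms show False by simp
  qed
  define T' where "T' = move_exp T j (j - 1)"
  have Tj: "Poly_Mapping.lookup T j \<noteq> 0" using j by (simp add: in_keys_iff)
  show thesis
  proof (rule that)
    show "Poly_Mapping.lookup T' (j - 1) \<noteq> 0" using j by (simp add: T'_def lookup_add lookup_minus lookup_single)
    show "T = move_exp T' (j - 1) (Suc (j - 1))"
      using move_exp_inverse[OF Tj, of "j - 1"] j by (simp add: T'_def)
    show "tdeg T' = tdeg T" using wdeg_move_exp[OF Tj, of "\<lambda>_. 1" "j - 1"] by (simp add: T'_def)
    show "weight T' = n" using wdeg_move_exp[OF Tj, of "\<lambda>k. k" "j - 1"] j assms by (simp add: T'_def)
  qed
qed

text \<open>Each monomial of weight \<open>n + 1\<close> arises by raising one index of a monomial of weight \<open>n\<close>,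
  and all coefficients are natural numbers, so no cancellation can occur.\<close>
lemma power_deriv_coeffs:
  "\<exists>c. (\<forall>T. Poly_Mapping.lookup (power_deriv m n :: 'a::field_char_0 dpoly) T = of_nat (c T))
       \<and> (\<forall>T. tdeg T = m \<and> weight T = n \<longrightarrow> 0 < c T)"
proof (induction n)
  case 0
  show ?case
  proof (intro exI conjI allI impI)
    fix T
    show "Poly_Mapping.lookup (power_deriv m 0 :: 'a dpoly) T
        = of_nat (if T = Poly_Mapping.single 0 m then 1 else 0)"
      by (auto simp: power_deriv_def lookup_single when_def)
    assume "tdeg T = m \<and> weight T = 0"
    then show "0 < (if T = Poly_Mapping.single 0 m then 1 else 0 :: nat)"
      using exp_eq_single_0_if_weight_0[of T] by auto
  qed
next
  case (Suc n)
  let ?g = "power_deriv m n :: 'a dpoly"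
  obtain c where c: "\<And>T. Poly_Mapping.lookup ?g T = of_nat (c T)"
    and c_pos: "\<And>T. tdeg T = m \<Longrightarrow> weight T = n \<Longrightarrow> 0 < c T"
    using Suc.IH by blast
  define c' where "c' T = (\<Sum>e\<in>Poly_Mapping.keys ?g. \<Sum>k\<in>Poly_Mapping.keys e.
     (c e * Poly_Mapping.lookup e k when move_exp e k (Suc k) = T))" for T
  show ?case
  proof (intro exI conjI allI impI)
    fix T
    have of_nat_when: "of_nat (x when P) = (of_nat x when P :: 'a)" for x P
      by (simp add: when_def)
    show "Poly_Mapping.lookup (power_deriv m (Suc n) :: 'a dpoly) T = of_nat (c' T)"
      by (simp add: power_deriv_Suc lookup_dderiv c'_def c of_nat_when)
    assume "tdeg T = m \<and> weight T = Suc n"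
    then obtain j T' where j: "Poly_Mapping.lookup T' j \<noteq> 0" and T: "T = move_exp T' j (Suc j)"
      and "tdeg T' = m" "weight T' = n"
      by (metis weight_Suc_obtain_move_exp)
    then have pos: "0 < c T'" by (intro c_pos)
    then have T'_key: "T' \<in> Poly_Mapping.keys ?g" by (simp add: in_keys_iff c)
    have "0 < (c T' * Poly_Mapping.lookup T' j when move_exp T' j (Suc j) = T)"
      using pos j T by simp
    also have "\<dots> \<le> (\<Sum>k\<in>Poly_Mapping.keys T'. (c T' * Poly_Mapping.lookup T' k when move_exp T' k (Suc k) = T))"
      by (rule member_le_sum) (use j in \<open>auto simp: in_keys_iff\<close>)
    also have "\<dots> \<le> c' T"
      unfolding c'_def by (rule member_le_sum[OF T'_key]) auto
    finally show "0 < c' T" .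
  qed
qed

lemma sum_window_pairs_le:
  assumes "\<And>b. f b + f (Suc b) \<le> (c::nat)"
  shows "(\<Sum>k<2 * n. f k) \<le> n * c"
proof (induction n)
  case (Suc n)
  have "(\<Sum>k<2 * Suc n. f k) = (\<Sum>k<2 * n. f k) + (f (2 * n) + f (Suc (2 * n)))" by simp
  with Suc assms[of "2 * n"] show ?case by simp
qed simp

lemma sum_window_triangle_le:
  assumes "\<And>b. f b + f (Suc b) \<le> (c::nat)"
  shows "(\<Sum>k<2 * n. (2 * n - 1 - k) * f k) \<le> n * n * c"
proof (induction n)
  case (Suc n)
  have "(2 * Suc n - 1 - k) * f k = (2 * n - 1 - k) * f k + 2 * f k" if "k < 2 * n" for k
  proof -
    have "2 * Suc n - 1 - k = (2 * n - 1 - k) + 2" using that by auto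
    then show ?thesis by (simp add: add_mult_distrib)
  qed
  then have "(\<Sum>k<2 * Suc n. (2 * Suc n - 1 - k) * f k)
      = (\<Sum>k<2 * n. (2 * n - 1 - k) * f k + 2 * f k) + f (2 * n)"
    by simp
  also have "\<dots> = (\<Sum>k<2 * n. (2 * n - 1 - k) * f k) + 2 * (\<Sum>k<2 * n. f k) + f (2 * n)"
    by (simp add: sum.distrib sum_distrib_left)
  also have "\<dots> \<le> n * n * c + 2 * (n * c) + c"
    using Suc sum_window_pairs_le[of f c n, OF assms] assms[of "2 * n"] by (intro add_mono) auto
  finally show ?case by (simp add: algebra_simps)
qed simp

lemma window_of_large_weight:
  fixes e :: "nat \<Rightarrow>\<^sub>0 nat"
  assumes window: "\<And>b. Poly_Mapping.lookup e b + Poly_Mapping.lookup e (Suc b) < m"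
    and deg: "tdeg e = (i + 1) * (m - 1) + 1"
  shows "i * tdeg e < weight e"
proof -
  define n where "n = i + 1"
  let ?K = "Poly_Mapping.keys e \<union> {..<2 * n}"
  let ?t = "\<lambda>k. (2 * n - 1 - k) * Poly_Mapping.lookup e k"
  have "(2 * n - 1) * tdeg e = (\<Sum>k\<in>?K. (2 * n - 1) * Poly_Mapping.lookup e k)"
    by (simp add: wdeg_extend[of ?K] sum_distrib_left)
  also have "\<dots> \<le> (\<Sum>k\<in>?K. k * Poly_Mapping.lookup e k + ?t k)"
  proof (rule sum_mono)
    fix k
    have "2 * n - 1 \<le> k + (2 * n - 1 - k)" by arith
    then show "(2 * n - 1) * Poly_Mapping.lookup e k \<le> k * Poly_Mapping.lookup e k + ?t k"
      by (metis add_mult_distrib mult_right_mono zero_le)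
  qed
  also have "\<dots> = weight e + (\<Sum>k\<in>?K. ?t k)"
    by (simp add: sum.distrib wdeg_extend[of ?K])
  also have "(\<Sum>k\<in>?K. ?t k) = (\<Sum>k<2 * n. ?t k)"
    by (rule sum.mono_neutral_right) auto
  also have "\<dots> \<le> n * n * (m - 1)"
  proof (rule sum_window_triangle_le)
    fix b
    show "Poly_Mapping.lookup e b + Poly_Mapping.lookup e (Suc b) \<le> m - 1" using window[of b] by arith
  qed
  finally have "(2 * n - 1) * tdeg e \<le> weight e + n * n * (m - 1)" by simp
  moreover obtain a where m: "m = Suc a" using window[of 0] by (cases m) auto
  then have "(2 * n - 1) * tdeg e = n * n * (m - 1) + (i * tdeg e + n)"
    unfolding deg n_def by (simp add: algebra_simps)
  ultimately show ?thesis unfolding n_def by linarith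
qed

lemma exp_eq_two_vars:
  fixes T :: "nat \<Rightarrow>\<^sub>0 nat"
  assumes keys: "Poly_Mapping.keys T \<subseteq> {b, Suc b}"
    and deg: "tdeg T = p + q" and wt: "weight T = b * p + Suc b * q"
  shows "T = Poly_Mapping.single b p + Poly_Mapping.single (Suc b) q"
proof -
  define x y where "x = Poly_Mapping.lookup T b" and "y = Poly_Mapping.lookup T (Suc b)"
  have "tdeg T = x + y" "weight T = b * x + Suc b * y"
    using wdeg_extend[OF _ keys, of "\<lambda>_. 1"] wdeg_extend[OF _ keys, of "\<lambda>k. k"] by (simp_all add: x_def y_def)
  with deg wt have xy: "x + y = p + q" and wt_xy: "b * x + Suc b * y = b * p + Suc b * q"
    by simp_all
  have "b * x + b * y = b * p + b * q" using xy by (metis distrib_left)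
  with wt_xy have "y = q" by (simp only: mult_Suc)
  with xy have "x = p" "y = q" by simp_all
  then show ?thesis
    by (intro poly_mapping_eqI) (use keys in \<open>auto simp: lookup_add lookup_single when_def x_def y_def in_keys_iff\<close>)
qed

lemma sq_weight_identity:
  "int (sq_weight T) - (2 * int b + 1) * int (weight T) + int b * (int b + 1) * int (tdeg T)
     = (\<Sum>k\<in>Poly_Mapping.keys T. (int k - int b) * (int k - int b - 1) * int (Poly_Mapping.lookup T k))"
proof -
  have "(\<Sum>k\<in>Poly_Mapping.keys T. (int k - int b) * (int k - int b - 1) * int (Poly_Mapping.lookup T k))
      = (\<Sum>k\<in>Poly_Mapping.keys T. int k * int k * int (Poly_Mapping.lookup T k)
          - (2 * int b + 1) * (int k * int (Poly_Mapping.lookup T k))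
          + int b * (int b + 1) * int (Poly_Mapping.lookup T k))"
    by (rule sum.cong) (simp_all add: algebra_simps)
  then show ?thesis
    by (simp add: wdeg_def sum.distrib sum_subtractf sum_distrib_left)
qed

text \<open>By the identity above, \<open>sq_weight\<close> is, for fixed degree and weight, an affine function of
  \<open>\<Sum> (k - b)(k - b - 1) T\<^sub>k\<close>, whose summands are nonnegative and vanish only at \<open>k \<in> {b, b + 1}\<close>.\<close>
lemma sq_weight_compressed_less:
  fixes T :: "nat \<Rightarrow>\<^sub>0 nat" and b p q :: nat
  defines "S \<equiv> Poly_Mapping.single b p + Poly_Mapping.single (Suc b) q"
  assumes deg: "tdeg T = p + q" and wt: "weight T = b * p + Suc b * q" and "T \<noteq> S"
  shows "sq_weight S < sq_weight T"
proof -
  define f where "f k = (int k - int b) * (int k - int b - 1)" for k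
  have f_nonneg: "0 \<le> f k" for k
    by (cases "k \<le> b") (simp_all add: f_def mult_nonpos_nonpos)
  obtain k where k: "k \<in> Poly_Mapping.keys T" "k \<noteq> b" "k \<noteq> Suc b"
    using exp_eq_two_vars[OF _ deg wt] \<open>T \<noteq> S\<close> unfolding S_def by blast
  have "0 < f k * int (Poly_Mapping.lookup T k)"
    using k by (auto simp: f_def in_keys_iff zero_less_mult_iff)
  also have "\<dots> \<le> (\<Sum>k\<in>Poly_Mapping.keys T. f k * int (Poly_Mapping.lookup T k))"
    by (rule member_le_sum) (use k f_nonneg in auto)
  also have "\<dots> = int (sq_weight T) - int (sq_weight S)"
    using sq_weight_identity[of T b] deg wt
    by (simp add: f_def S_def wdeg_add algebra_simps)
  finally show ?thesis by simp
qed

lemma sq_weight_le: "sq_weight e \<le> weight e * weight e"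
proof -
  have "sq_weight e = (\<Sum>k\<in>Poly_Mapping.keys e. k * (k * Poly_Mapping.lookup e k))"
    by (simp add: wdeg_def mult.assoc)
  also have "\<dots> \<le> (\<Sum>k\<in>Poly_Mapping.keys e. weight e * (k * Poly_Mapping.lookup e k))"
  proof (rule sum_mono)
    fix k assume k: "k \<in> Poly_Mapping.keys e"
    have "k \<le> k * Poly_Mapping.lookup e k" using k by (simp add: in_keys_iff)
    also have "\<dots> \<le> weight e" unfolding wdeg_def by (rule member_le_sum) (use k in auto)
    finally show "k * (k * Poly_Mapping.lookup e k) \<le> weight e * (k * Poly_Mapping.lookup e k)"
      by (rule mult_right_mono) simp
  qed
  also have "\<dots> = weight e * weight e" by (simp add: wdeg_def sum_distrib_left)
  finally show ?thesis .
qed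

text \<open>\<open>x\<^sup>e\<close> times the derivative is \<open>c\<^sub>S x\<^sup>e\<^sup>+\<^sup>S\<close> plus the terms \<open>x\<^sup>e\<^sup>+\<^sup>T\<close>; dividing by \<open>c\<^sub>S\<close> needs
  characteristic zero.\<close>
lemma mon_in_diff_ideal_reduction:
  fixes I :: "'a::field_char_0 dpoly set"
  assumes I: "is_diff_ideal I" and xm: "mon (Poly_Mapping.single 0 m) \<in> I"
    and S: "tdeg S = m"
    and others: "\<And>T. T \<in> Poly_Mapping.keys (power_deriv m (weight S) :: 'a dpoly) \<Longrightarrow> T \<noteq> S
        \<Longrightarrow> mon (e + T) \<in> I"
  shows "(mon (e + S) :: 'a dpoly) \<in> I"
proof -
  let ?g = "power_deriv m (weight S) :: 'a dpoly"
  obtain c where c: "\<And>T. Poly_Mapping.lookup ?g T = of_nat (c T)"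
    and c_pos: "\<And>T. tdeg T = m \<Longrightarrow> weight T = weight S \<Longrightarrow> 0 < c T"
    using power_deriv_coeffs[of m "weight S"] by blast
  have cS: "0 < c S" using c_pos S by blast
  then have S_key: "S \<in> Poly_Mapping.keys ?g" by (simp add: in_keys_iff c)
  let ?rest = "\<Sum>T\<in>Poly_Mapping.keys ?g - {S}. Poly_Mapping.single (e + T) (Poly_Mapping.lookup ?g T)"
  have "mon e * ?g = (\<Sum>T\<in>Poly_Mapping.keys ?g. Poly_Mapping.single (e + T) (Poly_Mapping.lookup ?g T))"
    by (subst poly_mapping_sum_single[of ?g]) (simp add: sum_distrib_left mult_single)
  also have "\<dots> = Poly_Mapping.single (e + S) (of_nat (c S)) + ?rest"
    by (subst sum.remove[OF finite_keys S_key]) (simp add: c)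
  finally have "Poly_Mapping.single (e + S) (of_nat (c S)) = mon e * ?g - ?rest" by simp
  moreover have "mon e * ?g \<in> I"
    unfolding power_deriv_def by (intro diff_ideal_mult[OF I] diff_ideal_dderiv_iter[OF I xm])
  moreover have "?rest \<in> I"
  proof (rule diff_ideal_sum[OF I])
    fix T assume "T \<in> Poly_Mapping.keys ?g - {S}"
    then have "Poly_Mapping.single 0 (Poly_Mapping.lookup ?g T) * mon (e + T) \<in> I"
      by (intro diff_ideal_mult[OF I] others) auto
    then show "Poly_Mapping.single (e + T) (Poly_Mapping.lookup ?g T) \<in> I" by (simp add: mult_single)
  qed
  ultimately have "Poly_Mapping.single (e + S) (of_nat (c S) :: 'a) \<in> I"
    by (simp add: diff_ideal_diff[OF I])
  then have "Poly_Mapping.single 0 (inverse (of_nat (c S))) * Poly_Mapping.single (e + S) (of_nat (c S) :: 'a) \<in> I"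
    by (rule diff_ideal_mult[OF I])
  then show ?thesis using cS by (simp add: mult_single)
qed

text \<open>Induction on the squared weight, bounded by \<open>w\<^sup>2\<close>, in decreasing order: a monomial with \<open>m\<close>
  factors among \<open>x\<^sub>b, x\<^sub>b\<^sub>+\<^sub>1\<close> contains a compressed factor \<open>S\<close>, and the reduction replaces \<open>S\<close> only by
  factors of larger squared weight.\<close>
lemma mon_in_diff_ideal_if_windows:
  fixes I :: "'a::field_char_0 dpoly set"
  assumes I: "is_diff_ideal I" and xm: "mon (Poly_Mapping.single 0 m) \<in> I"
    and windows: "\<And>e. tdeg e = d \<Longrightarrow> weight e = w
        \<Longrightarrow> \<exists>b. m \<le> Poly_Mapping.lookup e b + Poly_Mapping.lookup e (Suc b)"
  shows "tdeg e = d \<Longrightarrow> weight e = w \<Longrightarrow> (mon e :: 'a dpoly) \<in> I"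
proof (induction "w * w - sq_weight e" arbitrary: e rule: less_induct)
  case less
  obtain b where b: "m \<le> Poly_Mapping.lookup e b + Poly_Mapping.lookup e (Suc b)"
    using windows less.prems by blast
  define p where "p = min (Poly_Mapping.lookup e b) m"
  define S where "S = Poly_Mapping.single b p + Poly_Mapping.single (Suc b) (m - p)"
  define e0 where "e0 = e - S"
  have e: "e = e0 + S"
    by (rule poly_mapping_eqI) (use b in \<open>auto simp: e0_def S_def p_def lookup_add lookup_minus lookup_single when_def\<close>)
  have S_deg: "tdeg S = m" by (simp add: S_def wdeg_add p_def)
  show ?case unfolding e
  proof (rule mon_in_diff_ideal_reduction[OF I xm S_deg])
    fix T assume T: "T \<in> Poly_Mapping.keys (power_deriv m (weight S) :: 'a dpoly)" "T \<noteq> S"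
    then have T_deg: "tdeg T = m" and T_wt: "weight T = weight S"
      using keys_power_deriv by blast+
    have "sq_weight S < sq_weight T"
      unfolding S_def by (rule sq_weight_compressed_less) (use T T_deg T_wt S_deg in \<open>auto simp: S_def wdeg_add\<close>)
    then have "sq_weight e < sq_weight (e0 + T)" by (simp add: e wdeg_add)
    moreover have "tdeg (e0 + T) = d" "weight (e0 + T) = w"
      using less.prems T_deg T_wt S_deg by (simp_all add: e wdeg_add)
    moreover note sq_weight_le[of "e0 + T"]
    ultimately show "mon (e0 + T) \<in> I" by (intro less.hyps) auto
  qed
qed

theorem pure_power_in_diff_ideal:
  fixes I :: "'a::field_char_0 dpoly set"
  assumes I: "is_diff_ideal I" and xm: "(dvar 0 :: 'a dpoly) ^ m \<in> I" and m: "0 < m"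
  shows "(dvar i :: 'a dpoly) ^ ((i + 1) * m - i) \<in> I"
proof -
  define d where "d = (i + 1) * (m - 1) + 1"
  have "(i + 1) * m - i = d" using m by (cases m) (simp_all add: d_def algebra_simps)
  moreover have "(mon (Poly_Mapping.single i d) :: 'a dpoly) \<in> I"
  proof (rule mon_in_diff_ideal_if_windows[OF I, of m d "i * d"])
    show "mon (Poly_Mapping.single 0 m) \<in> I" using xm by (simp add: dvar_power)
    fix e :: "nat \<Rightarrow>\<^sub>0 nat" assume "tdeg e = d" "weight e = i * d"
    then show "\<exists>b. m \<le> Poly_Mapping.lookup e b + Poly_Mapping.lookup e (Suc b)"
      using window_of_large_weight[of e m i] by (force simp: d_def not_le)
  qed simp_all
  ultimately show ?thesis by (simp add: dvar_power)
qed

section \<open>An apolar pairing detecting non-membership\<close>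

definition dlower :: "'a::comm_ring_1 dpoly \<Rightarrow> 'a dpoly" where
  "dlower = mon_derivation (\<lambda>n. unit_exp (n - 1)) (\<lambda>n. if n = 0 then 0 else 1)"

definition exp_fact :: "(nat \<Rightarrow>\<^sub>0 nat) \<Rightarrow> nat" where
  "exp_fact e = (\<Prod>n\<in>Poly_Mapping.keys e. fact (Poly_Mapping.lookup e n))"

definition apolar :: "'a::comm_ring_1 dpoly \<Rightarrow> 'a dpoly \<Rightarrow> 'a" where
  "apolar F p = (\<Sum>e\<in>Poly_Mapping.keys p.
      Poly_Mapping.lookup p e * Poly_Mapping.lookup F e * of_nat (exp_fact e))"

lemma apolar_add_right: "apolar F (p + q) = apolar F p + apolar F q"
  unfolding apolar_def by (rule setsum_keys_plus_distrib) (auto simp: distrib_right)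

lemma apolar_zero_right [simp]: "apolar F 0 = 0"
  by (simp add: apolar_def)

lemma apolar_single_right: "apolar F (Poly_Mapping.single e a) = a * Poly_Mapping.lookup F e * of_nat (exp_fact e)"
  by (cases "a = 0") (simp_all add: apolar_def)

lemma apolar_sum_right: "apolar F (sum f A) = (\<Sum>a\<in>A. apolar F (f a))"
  by (induction A rule: infinite_finite_induct) (auto simp: apolar_add_right)

lemma apolar_diff_right: "apolar F (p - q) = apolar F p - apolar F q"
  using apolar_add_right[of F "p - q" q] by (simp add: algebra_simps)

lemma apolar_add_left: "apolar (F + G) p = apolar F p + apolar G p"
  by (simp add: apolar_def lookup_add algebra_simps sum.distrib)

lemma apolar_zero_left [simp]: "apolar 0 p = 0"
  by (simp add: apolar_def)

lemma exp_fact_extend: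
  "finite K \<Longrightarrow> Poly_Mapping.keys e \<subseteq> K \<Longrightarrow> exp_fact e = (\<Prod>n\<in>K. fact (Poly_Mapping.lookup e n))"
  unfolding exp_fact_def by (rule prod.mono_neutral_left) (auto simp: in_keys_iff)

lemma exp_fact_move_exp:
  assumes n: "Poly_Mapping.lookup e n \<noteq> 0"
  shows "Poly_Mapping.lookup e n * exp_fact (move_exp e n (Suc n))
       = exp_fact e * (Poly_Mapping.lookup e (Suc n) + 1)"
proof -
  let ?e' = "move_exp e n (Suc n)" and ?a = "Poly_Mapping.lookup e n"
    and ?c = "Poly_Mapping.lookup e (Suc n)"
  let ?R = "Poly_Mapping.keys e - {n, Suc n}"
  let ?K = "insert n (insert (Suc n) ?R)" and ?P = "\<Prod>k\<in>?R. fact (Poly_Mapping.lookup e k)"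
  have prod_K: "(\<Prod>k\<in>?K. g k) = g n * g (Suc n) * (\<Prod>k\<in>?R. g k)" for g :: "nat \<Rightarrow> nat"
    by simp
  have "Poly_Mapping.keys ?e' \<subseteq> ?K"
    by (auto simp: in_keys_iff lookup_add lookup_minus lookup_single split: if_splits)
  then have e': "exp_fact ?e' = fact (?a - 1) * fact (?c + 1) * ?P"
    by (simp add: exp_fact_extend[of ?K] prod_K lookup_add lookup_minus lookup_single del: insert_Diff_single)
  have "Poly_Mapping.keys e \<subseteq> ?K" by auto
  then have e: "exp_fact e = fact ?a * fact ?c * ?P"
    by (simp add: exp_fact_extend[of ?K] prod_K del: insert_Diff_single)
  have a: "?a * fact (?a - 1) = fact ?a"
    using n by (metis fact_reduce neq0_conv of_nat_id)
  have c: "fact (?c + 1) = (?c + 1) * fact ?c" by simp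
  have "?a * exp_fact ?e' = (?a * fact (?a - 1)) * (fact (?c + 1) * ?P)"
    by (simp only: e' mult.assoc)
  also have "\<dots> = fact ?a * ((?c + 1) * fact ?c * ?P)"
    by (simp only: a c mult.assoc)
  also have "\<dots> = exp_fact e * (?c + 1)"
    by (simp only: e mult_ac)
  finally show ?thesis .
qed

text \<open>Both sides are nonzero exactly when \<open>f\<close> arises from \<open>e\<close> by moving one unit from \<open>x\<^sub>n\<close> to \<open>x\<^sub>n\<^sub>+\<^sub>1\<close>;
  then they agree by the previous lemma.\<close>
lemma apolar_dderiv_term:
  fixes b :: "'a::comm_ring_1"
  shows "of_nat (Poly_Mapping.lookup e n) * (b when f = move_exp e n (Suc n))
     * of_nat (exp_fact (move_exp e n (Suc n)))
   = of_nat (exp_fact e) * (b * of_nat (Poly_Mapping.lookup f (Suc n)) when move_exp f (Suc n) n = e)"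
proof (cases "Poly_Mapping.lookup e n \<noteq> 0 \<and> f = move_exp e n (Suc n)")
  case True
  then have "move_exp f (Suc n) n = e" "Poly_Mapping.lookup f (Suc n) = Poly_Mapping.lookup e (Suc n) + 1"
    using move_exp_inverse[of e n "Suc n"] by (auto simp: lookup_add lookup_minus lookup_single)
  have key: "(of_nat (Poly_Mapping.lookup e n) * of_nat (exp_fact (move_exp e n (Suc n))) :: 'a)
      = of_nat (exp_fact e) * of_nat (Poly_Mapping.lookup f (Suc n))"
    using exp_fact_move_exp[of e n] True \<open>Poly_Mapping.lookup f (Suc n) = _\<close> by (metis of_nat_mult)
  have "of_nat (Poly_Mapping.lookup e n) * (b when f = move_exp e n (Suc n))
      * of_nat (exp_fact (move_exp e n (Suc n)))
      = b * (of_nat (Poly_Mapping.lookup e n) * of_nat (exp_fact (move_exp e n (Suc n))))"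
    using True by (simp add: when_def mult_ac)
  also have "\<dots> = b * (of_nat (exp_fact e) * of_nat (Poly_Mapping.lookup f (Suc n)))"
    by (simp only: key)
  also have "\<dots> = of_nat (exp_fact e) * (b * of_nat (Poly_Mapping.lookup f (Suc n))
      when move_exp f (Suc n) n = e)"
    using \<open>move_exp f (Suc n) n = e\<close> by (simp add: when_def mult_ac)
  finally show ?thesis .
next
  case False
  have "move_exp f (Suc n) n \<noteq> e" if "Poly_Mapping.lookup f (Suc n) \<noteq> 0"
  proof
    assume e: "move_exp f (Suc n) n = e"
    then have "Poly_Mapping.lookup e n \<noteq> 0" by (auto simp: lookup_add lookup_minus lookup_single)
    moreover have "f = move_exp e n (Suc n)" using move_exp_inverse[OF that, of n] e by metis
    ultimately show False using False by blast
  qed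
  then have "(b * of_nat (Poly_Mapping.lookup f (Suc n)) when move_exp f (Suc n) n = e) = 0"
    by (cases "Poly_Mapping.lookup f (Suc n) = 0") (simp_all add: when_def)
  moreover have "of_nat (Poly_Mapping.lookup e n) * (b when f = move_exp e n (Suc n)) = 0"
    using False by (auto simp: when_def)
  ultimately show ?thesis by simp
qed

lemma apolar_dderiv_single:
  "apolar (Poly_Mapping.single f b) (dderiv (Poly_Mapping.single e a))
     = apolar (dlower (Poly_Mapping.single f b)) (Poly_Mapping.single e a)"
proof -
  define B where "B = Suc (Max (Poly_Mapping.keys e \<union> Poly_Mapping.keys f))"
  have keys_B: "Poly_Mapping.keys e \<union> Poly_Mapping.keys f \<subseteq> {..<B}"
    using Max_ge[of "Poly_Mapping.keys e \<union> Poly_Mapping.keys f"] by (force simp: B_def less_Suc_eq_le)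
  define L where "L n = a * of_nat (Poly_Mapping.lookup e n) * (b when f = move_exp e n (Suc n))
      * of_nat (exp_fact (move_exp e n (Suc n)))" for n
  define R where "R k = a * of_nat (exp_fact e)
      * (b * of_nat (Poly_Mapping.lookup f k) * (if k = 0 then 0 else 1) when move_exp f k (k - 1) = e)" for k
  have "apolar (Poly_Mapping.single f b) (dderiv (Poly_Mapping.single e a)) = (\<Sum>n\<in>Poly_Mapping.keys e. L n)"
    by (simp add: dderiv_eq_mon_derivation mon_derivation_single apolar_sum_right apolar_single_right
        L_def lookup_single when_def)
  also have "\<dots> = (\<Sum>n<B. L n)"
    by (rule sum_keys_extend) (use keys_B in \<open>auto simp: L_def\<close>)
  also have "\<dots> = (\<Sum>n<B. R (Suc n))"
  proof (rule sum.cong[OF refl])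
    fix n
    have "L n = a * (of_nat (Poly_Mapping.lookup e n) * (b when f = move_exp e n (Suc n))
        * of_nat (exp_fact (move_exp e n (Suc n))))"
      by (simp add: L_def mult.assoc)
    also have "\<dots> = a * (of_nat (exp_fact e)
        * (b * of_nat (Poly_Mapping.lookup f (Suc n)) when move_exp f (Suc n) n = e))"
      by (simp only: apolar_dderiv_term)
    also have "\<dots> = R (Suc n)" by (simp add: R_def mult.assoc)
    finally show "L n = R (Suc n)" .
  qed
  also have "\<dots> = (\<Sum>k<Suc B. R k)"
  proof -
    have "R 0 = 0" by (simp add: R_def)
    then show ?thesis by (simp only: sum.lessThan_Suc_shift add_0)
  qed
  also have "\<dots> = (\<Sum>k\<in>Poly_Mapping.keys f. R k)"
    by (rule sum_keys_extend[symmetric]) (use keys_B in \<open>auto simp: R_def\<close>)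
  also have "\<dots> = apolar (dlower (Poly_Mapping.single f b)) (Poly_Mapping.single e a)"
    by (simp add: dlower_def mon_derivation_single apolar_single_right lookup_sum lookup_single
        R_def sum_distrib_left algebra_simps)
  finally show ?thesis .
qed

lemma apolar_dderiv: "apolar F (dderiv p) = apolar (dlower F) p"
proof (induction p rule: poly_mapping_induct)
  case (single e a)
  show ?case
  proof (induction F rule: poly_mapping_induct)
    case (add F G)
    then show ?case by (simp add: dlower_def mon_derivation_add apolar_add_left)
  qed (simp_all add: dlower_def apolar_dderiv_single[unfolded dlower_def])
qed (simp_all add: dderiv_eq_mon_derivation mon_derivation_add apolar_add_right)

definition apolar_ideal :: "'a::comm_ring_1 dpoly \<Rightarrow> 'a dpoly set" where
  "apolar_ideal F = {p. \<forall>q. apolar F (q * p) = 0}"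

lemma is_diff_ideal_apolar_ideal:
  assumes "dlower F = 0"
  shows "is_diff_ideal (apolar_ideal F)"
  unfolding is_diff_ideal_def
proof (intro conjI ballI allI)
  fix p assume p: "p \<in> apolar_ideal F"
  show "dderiv p \<in> apolar_ideal F"
  proof (unfold apolar_ideal_def, intro CollectI allI)
    fix q
    have "q * dderiv p = dderiv (q * p) - dderiv q * p"
      by (simp add: dderiv_eq_mon_derivation mon_derivation_mult)
    then show "apolar F (q * dderiv p) = 0"
      using p assms by (simp add: apolar_diff_right apolar_dderiv apolar_ideal_def)
  qed
  show "r * p \<in> apolar_ideal F" for r
    using p by (simp add: apolar_ideal_def mult.assoc[symmetric])
qed (auto simp: apolar_ideal_def distrib_left apolar_add_right)

lemma x0_power_in_apolar_ideal:
  assumes "\<And>e. e \<in> Poly_Mapping.keys F \<Longrightarrow> Poly_Mapping.lookup e 0 < m"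
  shows "(dvar 0 :: 'a::comm_ring_1 dpoly) ^ m \<in> apolar_ideal F"
proof (unfold apolar_ideal_def, intro CollectI allI)
  fix q :: "'a dpoly"
  have "q * dvar 0 ^ m = (\<Sum>e\<in>Poly_Mapping.keys q.
      Poly_Mapping.single (e + Poly_Mapping.single 0 m) (Poly_Mapping.lookup q e))"
    by (subst poly_mapping_sum_single[of q]) (simp add: dvar_power sum_distrib_right mult_single)
  moreover have "Poly_Mapping.lookup F (e + Poly_Mapping.single 0 m) = 0" for e
    using assms[of "e + Poly_Mapping.single 0 m"] by (auto simp: lookup_add in_keys_iff)
  ultimately show "apolar F (q * dvar 0 ^ m) = 0"
    by (simp add: apolar_sum_right apolar_single_right)
qed

lemma pure_power_notin_apolar_ideal:
  assumes "Poly_Mapping.lookup F (Poly_Mapping.single i k) \<noteq> (0::'a::field_char_0)"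
  shows "dvar i ^ k \<notin> apolar_ideal F"
proof
  assume "dvar i ^ k \<in> apolar_ideal F"
  then have "apolar F (1 * mon (Poly_Mapping.single i k)) = 0"
    unfolding apolar_ideal_def dvar_power by blast
  moreover have "exp_fact (Poly_Mapping.single i k) = fact k"
    by (simp add: exp_fact_def)
  ultimately show False using assms by (simp add: apolar_single_right)
qed

section \<open>A Hankel determinant annihilated by \<open>dlower\<close>\<close>

lemma dlower_dvar: "dlower (dvar n) = (if n = 0 then 0 else dvar (n - 1))"
  by (simp add: dlower_def dvar_def mon_derivation_single)

text \<open>\<open>dlower\<close> acts on \<open>n! x\<^sub>n\<close> as \<open>d/dt\<close> acts on \<open>t\<^sup>n\<close>.\<close>
definition fact_dvar :: "nat \<Rightarrow> 'a::comm_ring_1 dpoly" where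
  "fact_dvar n = of_nat (fact n) * dvar n"

lemma dlower_fact_dvar: "dlower (fact_dvar n :: 'a::comm_ring_1 dpoly) = of_nat n * fact_dvar (n - 1)"
proof -
  have "dlower (fact_dvar n :: 'a dpoly) = of_nat (fact n) * dlower (dvar n)"
    by (simp only: fact_dvar_def dlower_def mon_derivation_of_nat_mult)
  then show ?thesis
    by (cases n) (simp_all only: dlower_dvar fact_dvar_def fact_Suc of_nat_mult of_nat_id mult.assoc,
        simp_all)
qed

lemma dlower_fact_dvar_add:
  "dlower (fact_dvar (r + c) :: 'a::comm_ring_1 dpoly)
     = of_nat r * fact_dvar (r - 1 + c) + of_nat c * fact_dvar (r + (c - 1))"
proof -
  have "of_nat r * fact_dvar (r - 1 + c) = (of_nat r * fact_dvar (r + c - 1) :: 'a dpoly)"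
    by (cases r) simp_all
  moreover have "of_nat c * fact_dvar (r + (c - 1)) = (of_nat c * fact_dvar (r + c - 1) :: 'a dpoly)"
    by (cases c) simp_all
  ultimately show ?thesis by (simp add: dlower_fact_dvar distrib_right)
qed

definition hankel_det :: "nat \<Rightarrow> 'a::comm_ring_1 dpoly" where
  "hankel_det d = det (mat d d (\<lambda>(r, c). fact_dvar (r + c)))"

lemma det_mat_leibniz:
  "det (mat d d (\<lambda>(r, c). f r c) :: 'a::comm_ring_1 mat)
     = (\<Sum>p\<in>{p. p permutes {0..<d}}. signof p * (\<Prod>r\<in>{0..<d}. f r (p r)))"
proof -
  have "det (mat d d (\<lambda>(r, c). f r c))
      = (\<Sum>p\<in>{p. p permutes {0..<d}}. signof p * (\<Prod>r = 0..<d. mat d d (\<lambda>(r, c). f r c) $$ (r, p r)))"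
    by (rule det_def') simp
  also have "\<dots> = (\<Sum>p\<in>{p. p permutes {0..<d}}. signof p * (\<Prod>r\<in>{0..<d}. f r (p r)))"
  proof (rule sum.cong[OF refl])
    fix p assume "p \<in> {p. p permutes {0..<d}}"
    then have "(\<Prod>r = 0..<d. mat d d (\<lambda>(r, c). f r c) $$ (r, p r)) = (\<Prod>r\<in>{0..<d}. f r (p r))"
      by (intro prod.cong) (auto dest: permutes_in_image)
    then show "signof p * (\<Prod>r = 0..<d. mat d d (\<lambda>(r, c). f r c) $$ (r, p r))
        = signof p * (\<Prod>r\<in>{0..<d}. f r (p r))" by simp
  qed
  finally show ?thesis .
qed

lemma prod_remove_if:
  assumes "finite A" "r \<in> A"
  shows "(\<Prod>x\<in>A. if x = r then a else g x) = a * (\<Prod>x\<in>A - {r}. g x)"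
proof -
  have "(\<Prod>x\<in>A - {r}. if x = r then a else g x) = (\<Prod>x\<in>A - {r}. g x)"
    by (rule prod.cong) auto
  then show ?thesis by (simp add: prod.remove[OF assms])
qed

lemma det_row_shift:
  assumes "r < d"
  shows "det (mat d d (\<lambda>(x, y). f (if x = r then r - 1 else x) y) :: 'a::comm_ring_1 mat)
     = (\<Sum>p\<in>{p. p permutes {0..<d}}. signof p * (f (r - 1) (p r) * (\<Prod>x\<in>{0..<d} - {r}. f x (p x))))"
proof -
  have "(\<Prod>x\<in>{0..<d}. f (if x = r then r - 1 else x) (p x))
      = (\<Prod>x\<in>{0..<d}. if x = r then f (r - 1) (p r) else f x (p x))" for p
    by (rule prod.cong) auto
  then show ?thesis
    using assms by (simp add: det_mat_leibniz prod_remove_if)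
qed

lemma det_row_shift_eq_0:
  assumes "0 < r" "r < d"
  shows "det (mat d d (\<lambda>(x, y). f (if x = r then r - 1 else x) y) :: 'a::comm_ring_1 mat) = 0"
  by (rule det_identical_rows[of _ d r "r - 1"]) (use assms in \<open>auto simp: row_def\<close>)

lemma det_col_shift:
  assumes "c < d"
  shows "det (mat d d (\<lambda>(x, y). f x (if y = c then c - 1 else y)) :: 'a::comm_ring_1 mat)
     = (\<Sum>p\<in>{p. p permutes {0..<d}}. signof p *
         (f (Hilbert_Choice.inv p c) (c - 1) * (\<Prod>x\<in>{0..<d} - {Hilbert_Choice.inv p c}. f x (p x))))"
proof -
  have "(\<Prod>x\<in>{0..<d}. f x (if p x = c then c - 1 else p x))
      = f (Hilbert_Choice.inv p c) (c - 1) * (\<Prod>x\<in>{0..<d} - {Hilbert_Choice.inv p c}. f x (p x))"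
    if p: "p permutes {0..<d}" for p
  proof -
    have "Hilbert_Choice.inv p c \<in> {0..<d}" using assms permutes_in_image[OF permutes_inv[OF p]] by simp
    moreover have "p x = c \<longleftrightarrow> x = Hilbert_Choice.inv p c" for x
      using permutes_inverses[OF p] by metis
    then have "(\<Prod>x\<in>{0..<d}. f x (if p x = c then c - 1 else p x))
        = (\<Prod>x\<in>{0..<d}. if x = Hilbert_Choice.inv p c then f (Hilbert_Choice.inv p c) (c - 1) else f x (p x))"
      by (intro prod.cong) auto
    ultimately show ?thesis by (simp add: prod_remove_if)
  qed
  then show ?thesis by (simp add: det_mat_leibniz)
qed

lemma det_col_shift_eq_0:
  assumes "0 < c" "c < d"
  shows "det (mat d d (\<lambda>(x, y). f x (if y = c then c - 1 else y)) :: 'a::comm_ring_1 mat) = 0"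
  by (rule det_identical_columns[of _ d c "c - 1"]) (use assms in \<open>auto simp: col_def\<close>)

text \<open>Sums of determinants with two equal rows, after exchanging the sums.\<close>
lemma leibniz_row_shift_sum_eq_0:
  fixes h :: "nat \<Rightarrow> nat \<Rightarrow> 'a::comm_ring_1"
  shows "(\<Sum>p\<in>{p. p permutes {0..<d}}. signof p * (\<Sum>r\<in>{0..<d}.
      of_nat r * (h (r - 1) (p r) * (\<Prod>x\<in>{0..<d} - {r}. h x (p x))))) = 0"
proof -
  let ?D = "{0..<d}" and ?P = "{p. p permutes {0..<d}}"
  have "(\<Sum>p\<in>?P. signof p * (\<Sum>r\<in>?D. of_nat r * (h (r - 1) (p r) * (\<Prod>x\<in>?D - {r}. h x (p x)))))
      = (\<Sum>r\<in>?D. of_nat r * (\<Sum>p\<in>?P. signof p * (h (r - 1) (p r) * (\<Prod>x\<in>?D - {r}. h x (p x)))))"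
    unfolding sum_distrib_left by (subst sum.swap) (simp add: mult.left_commute)
  also have "\<dots> = (\<Sum>r\<in>?D. of_nat r * det (mat d d (\<lambda>(x, y). h (if x = r then r - 1 else x) y)))"
    by (rule sum.cong[OF refl]) (simp add: det_row_shift)
  also have "\<dots> = 0"
  proof (intro sum.neutral ballI)
    fix r assume "r \<in> ?D"
    then show "of_nat r * det (mat d d (\<lambda>(x, y). h (if x = r then r - 1 else x) y)) = 0"
      using det_row_shift_eq_0[of r d h] by (cases "r = 0") simp_all
  qed
  finally show ?thesis .
qed

text \<open>Reindexing each inner sum by \<open>p\<^sup>-\<^sup>1\<close> turns this into a sum of determinants with two equal
  columns.\<close>
lemma leibniz_col_shift_sum_eq_0:
  fixes h :: "nat \<Rightarrow> nat \<Rightarrow> 'a::comm_ring_1"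
  shows "(\<Sum>p\<in>{p. p permutes {0..<d}}. signof p * (\<Sum>r\<in>{0..<d}.
      of_nat (p r) * (h r (p r - 1) * (\<Prod>x\<in>{0..<d} - {r}. h x (p x))))) = 0"
proof -
  let ?D = "{0..<d}" and ?P = "{p. p permutes {0..<d}}"
  let ?rest = "\<lambda>p r. \<Prod>x\<in>?D - {r}. h x (p x)" and ?q = "\<lambda>p c. Hilbert_Choice.inv p c"
  have "(\<Sum>r\<in>?D. of_nat (p r) * (h r (p r - 1) * ?rest p r))
      = (\<Sum>c\<in>?D. of_nat c * (h (?q p c) (c - 1) * ?rest p (?q p c)))" if p: "p permutes ?D" for p
    using sum.permute[OF permutes_inv[OF p], of "\<lambda>r. of_nat (p r) * (h r (p r - 1) * ?rest p r)"]
    by (simp add: comp_def permutes_inverses(1)[OF p])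
  then have "(\<Sum>p\<in>?P. signof p * (\<Sum>r\<in>?D. of_nat (p r) * (h r (p r - 1) * ?rest p r)))
      = (\<Sum>p\<in>?P. signof p * (\<Sum>c\<in>?D. of_nat c * (h (?q p c) (c - 1) * ?rest p (?q p c))))"
    by (intro sum.cong) simp_all
  also have "\<dots> = (\<Sum>c\<in>?D. of_nat c * (\<Sum>p\<in>?P. signof p * (h (?q p c) (c - 1) * ?rest p (?q p c))))"
    unfolding sum_distrib_left by (subst sum.swap) (simp add: mult.left_commute)
  also have "\<dots> = (\<Sum>c\<in>?D. of_nat c * det (mat d d (\<lambda>(x, y). h x (if y = c then c - 1 else y))))"
    by (rule sum.cong[OF refl]) (simp add: det_col_shift)
  also have "\<dots> = 0"
  proof (intro sum.neutral ballI)
    fix c assume "c \<in> ?D"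
    then show "of_nat c * det (mat d d (\<lambda>(x, y). h x (if y = c then c - 1 else y))) = 0"
      using det_col_shift_eq_0[of c d h] by (cases "c = 0") simp_all
  qed
  finally show ?thesis .
qed

lemma dlower_hankel_det: "dlower (hankel_det d :: 'a::comm_ring_1 dpoly) = 0"
proof -
  let ?D = "{0..<d}" and ?P = "{p. p permutes {0..<d}}"
  let ?h = "\<lambda>x y. fact_dvar (x + y) :: 'a dpoly"
  let ?rest = "\<lambda>p r. \<Prod>x\<in>?D - {r}. ?h x (p x)"
  have "dlower (hankel_det d :: 'a dpoly)
      = (\<Sum>p\<in>?P. signof p * (\<Sum>r\<in>?D. dlower (?h r (p r)) * ?rest p r))"
    by (simp add: hankel_det_def det_mat_leibniz dlower_def mon_derivation_sum mon_derivation_mult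
        mon_derivation_prod del: of_nat_add)
  also have "\<dots> = (\<Sum>p\<in>?P. signof p * (\<Sum>r\<in>?D. of_nat r * (?h (r - 1) (p r) * ?rest p r)))
      + (\<Sum>p\<in>?P. signof p * (\<Sum>r\<in>?D. of_nat (p r) * (?h r (p r - 1) * ?rest p r)))"
    by (simp add: dlower_fact_dvar_add sum.distrib distrib_left distrib_right mult.assoc del: of_nat_add)
  finally show ?thesis
    using leibniz_row_shift_sum_eq_0[of ?h d] leibniz_col_shift_sum_eq_0[of ?h d] by simp
qed

section \<open>The monomials of the Hankel determinant\<close>

definition perm_exp :: "nat \<Rightarrow> (nat \<Rightarrow> nat) \<Rightarrow> nat \<Rightarrow>\<^sub>0 nat" where
  "perm_exp d p = (\<Sum>r\<in>{0..<d}. unit_exp (r + p r))"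

lemma prod_fact_dvar:
  "finite A \<Longrightarrow> (\<Prod>r\<in>A. fact_dvar (g r) :: 'a::comm_ring_1 dpoly)
     = Poly_Mapping.single (\<Sum>r\<in>A. unit_exp (g r)) (\<Prod>r\<in>A. of_nat (fact (g r)))"
proof (induction A rule: finite_induct)
  case (insert x A)
  have "(fact_dvar (g x) :: 'a dpoly) = Poly_Mapping.single (unit_exp (g x)) (of_nat (fact (g x)))"
    by (simp add: fact_dvar_def dvar_def mult_single flip: single_of_nat)
  with insert show ?case by (simp add: mult_single)
qed simp

lemma hankel_det_eq_sum_single:
  "hankel_det d = (\<Sum>p\<in>{p. p permutes {0..<d}}.
     Poly_Mapping.single (perm_exp d p) (of_int (sign p) * (\<Prod>r\<in>{0..<d}. of_nat (fact (r + p r)))))"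
  by (simp add: hankel_det_def det_mat_leibniz prod_fact_dvar perm_exp_def mult_single
      flip: single_of_int)

lemma keys_hankel_det:
  assumes "e \<in> Poly_Mapping.keys (hankel_det d :: 'a::comm_ring_1 dpoly)"
  shows "Poly_Mapping.lookup e 0 \<le> 1" "tdeg e = d"
proof -
  obtain p where "e = perm_exp d p"
    using assms keys_sum unfolding hankel_det_eq_sum_single by (fastforce split: if_splits)
  moreover have "Poly_Mapping.lookup (perm_exp d p) 0 \<le> 1"
  proof -
    have "Poly_Mapping.lookup (perm_exp d p) 0 = (\<Sum>r\<in>{0..<d}. (1 when r + p r = 0))"
      by (simp only: perm_exp_def lookup_sum lookup_single)
    also have "\<dots> \<le> (\<Sum>r\<in>{0..<d}. if r = 0 then 1 else 0)"
      by (rule sum_mono) (auto simp: when_def)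
    also have "\<dots> \<le> 1" by (simp add: sum.delta)
    finally show ?thesis .
  qed
  ultimately show "Poly_Mapping.lookup e 0 \<le> 1" "tdeg e = d"
    by (simp_all add: perm_exp_def wdeg_sum)
qed

lemma perm_exp_eq_pure_iff:
  assumes p: "p permutes {0..<Suc i}"
  shows "perm_exp (Suc i) p = Poly_Mapping.single i (Suc i) \<longleftrightarrow> p = (\<lambda>r. if r \<le> i then i - r else r)"
proof
  assume pure: "perm_exp (Suc i) p = Poly_Mapping.single i (Suc i)"
  show "p = (\<lambda>r. if r \<le> i then i - r else r)"
  proof
    fix r
    show "p r = (if r \<le> i then i - r else r)"
    proof (cases "r \<le> i")
      case True
      have "Poly_Mapping.lookup (perm_exp (Suc i) p) (r + p r) = (\<Sum>x\<in>{0..<Suc i}. (1 when x + p x = r + p r))"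
        by (simp only: perm_exp_def lookup_sum lookup_single)
      also have "\<dots> > 0"
        by (rule ordered_comm_monoid_add_class.sum_pos2[of _ r]) (use True in auto)
      finally have "Poly_Mapping.lookup (perm_exp (Suc i) p) (r + p r) \<noteq> 0" by simp
      with True show ?thesis by (auto simp: pure lookup_single when_def split: if_splits)
    qed (use permutes_not_in[OF p] in auto)
  qed
next
  assume "p = (\<lambda>r. if r \<le> i then i - r else r)"
  then have "perm_exp (Suc i) p = (\<Sum>r\<in>{0..<Suc i}. unit_exp i)"
    unfolding perm_exp_def by (intro sum.cong) auto
  also have "\<dots> = Poly_Mapping.single i (card {0..<Suc i})"
    by (induction rule: finite_induct[OF finite_atLeastLessThan])
      (simp_all add: single_add[symmetric] del: sum_constant)
  finally show "perm_exp (Suc i) p = Poly_Mapping.single i (Suc i)" by simp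
qed

lemma antidiagonal_permutes: "(\<lambda>r. if r \<le> i then i - r else r) permutes {0..<Suc i}"
proof (rule bij_imp_permutes)
  show "bij_betw (\<lambda>r. if r \<le> i then i - r else r) {0..<Suc i} {0..<Suc i}"
    by (rule bij_betw_byWitness[where f' = "\<lambda>r. i - r"]) auto
qed auto

lemma lookup_hankel_det_pure:
  "Poly_Mapping.lookup (hankel_det (Suc i) :: 'a::field_char_0 dpoly) (Poly_Mapping.single i (Suc i)) \<noteq> 0"
proof -
  let ?p0 = "\<lambda>r. if r \<le> i then i - r else r"
  let ?c = "\<lambda>p. of_int (sign p) * (\<Prod>r\<in>{0..<Suc i}. of_nat (fact (r + p r))) :: 'a"
  have "Poly_Mapping.lookup (hankel_det (Suc i) :: 'a dpoly) (Poly_Mapping.single i (Suc i))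
      = (\<Sum>p\<in>{p. p permutes {0..<Suc i}}. if p = ?p0 then ?c p else 0)"
    unfolding hankel_det_eq_sum_single lookup_sum
    by (intro sum.cong) (auto simp: lookup_single when_def perm_exp_eq_pure_iff)
  also have "\<dots> = ?c ?p0"
    using antidiagonal_permutes[of i] by (simp add: sum.delta' finite_permutations)
  also have "\<dots> \<noteq> 0" by (simp add: prod_zero_iff)
  finally show ?thesis .
qed

definition restrict_var :: "nat \<Rightarrow> 'a::comm_ring_1 dpoly \<Rightarrow> 'a dpoly" where
  "restrict_var i p = Poly_Mapping.mapp (\<lambda>e c. if Poly_Mapping.keys e \<subseteq> {i} then c else 0) p"

lemma lookup_restrict_var:
  "Poly_Mapping.lookup (restrict_var i p) e
     = (if Poly_Mapping.keys e \<subseteq> {i} then Poly_Mapping.lookup p e else 0)"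
  by (simp add: restrict_var_def lookup_mapp when_def in_keys_iff)

lemma restrict_var_zero [simp]: "restrict_var i 0 = 0"
  by (rule poly_mapping_eqI) (simp add: lookup_restrict_var)

lemma restrict_var_add: "restrict_var i (p + q) = restrict_var i p + restrict_var i q"
  by (rule poly_mapping_eqI) (simp add: lookup_restrict_var lookup_add)

lemma restrict_var_single:
  "restrict_var i (Poly_Mapping.single e a)
     = (if Poly_Mapping.keys e \<subseteq> {i} then Poly_Mapping.single e a else 0)"
  by (rule poly_mapping_eqI) (auto simp: lookup_restrict_var lookup_single when_def)

lemma restrict_var_mult: "restrict_var i (p * q) = restrict_var i p * restrict_var i q"
proof (induction p rule: poly_mapping_induct)
  case (single e a)
  show ?case
    by (induction q rule: poly_mapping_induct)
      (simp_all add: restrict_var_add restrict_var_single distrib_left mult_single keys_add_exp)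
qed (simp_all add: restrict_var_add distrib_right)

lemma restrict_var_one [simp]: "restrict_var i 1 = 1"
  using restrict_var_single[of i 0 1] by simp

lemma restrict_var_power: "restrict_var i (p ^ n) = restrict_var i p ^ n"
  by (induction n) (simp_all add: restrict_var_mult)

lemma lookup_power_pure:
  fixes G :: "'a::comm_ring_1 dpoly"
  assumes pure: "\<And>e. e \<in> Poly_Mapping.keys G \<Longrightarrow> Poly_Mapping.keys e \<subseteq> {i} \<Longrightarrow> tdeg e = d"
  shows "Poly_Mapping.lookup (G ^ n) (Poly_Mapping.single i (n * d))
       = Poly_Mapping.lookup G (Poly_Mapping.single i d) ^ n"
proof -
  let ?c = "Poly_Mapping.lookup G (Poly_Mapping.single i d)"
  have keys_single: "Poly_Mapping.keys (Poly_Mapping.single i k :: nat \<Rightarrow>\<^sub>0 nat) \<subseteq> {i}" for k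
    by simp
  have "restrict_var i G = Poly_Mapping.single (Poly_Mapping.single i d) ?c"
  proof (rule poly_mapping_eqI)
    fix e
    show "Poly_Mapping.lookup (restrict_var i G) e
        = Poly_Mapping.lookup (Poly_Mapping.single (Poly_Mapping.single i d) ?c) e"
    proof (cases "Poly_Mapping.keys e \<subseteq> {i} \<and> Poly_Mapping.lookup G e \<noteq> 0")
      case True
      then have "e = Poly_Mapping.single i d"
        using pure[of e] exp_eq_single_if_keys_subset[of e i] by (simp add: in_keys_iff)
      with True show ?thesis by (simp add: lookup_restrict_var)
    qed (auto simp: lookup_restrict_var lookup_single when_def split: if_splits)
  qed
  then have "restrict_var i (G ^ n) = Poly_Mapping.single (Poly_Mapping.single i d) ?c ^ n"
    by (simp only: restrict_var_power)
  also have "\<dots> = Poly_Mapping.single (Poly_Mapping.single i (n * d)) (?c ^ n)"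
    by (induction n) (simp_all add: mult_single single_add[symmetric])
  finally have "restrict_var i (G ^ n) = Poly_Mapping.single (Poly_Mapping.single i (n * d)) (?c ^ n)" .
  then show ?thesis
    by (metis keys_single lookup_restrict_var lookup_single_eq)
qed

lemma keys_power_lookup_le:
  fixes G :: "'a::comm_ring_1 dpoly"
  assumes "\<And>e. e \<in> Poly_Mapping.keys G \<Longrightarrow> Poly_Mapping.lookup e k \<le> a"
  shows "e \<in> Poly_Mapping.keys (G ^ n) \<Longrightarrow> Poly_Mapping.lookup e k \<le> n * a"
proof (induction n arbitrary: e)
  case (Suc n)
  then obtain f g where "f \<in> Poly_Mapping.keys G" "g \<in> Poly_Mapping.keys (G ^ n)" "e = f + g"
    using keys_mult[of G "G ^ n"] by auto
  with Suc.IH assms show ?case by (fastforce simp: lookup_add)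
qed simp

section \<open>Powers of \<open>x\<^sub>i\<close> outside \<open>[x\<^sup>m]\<close>\<close>

theorem exists_diff_ideal_avoiding_pure_powers:
  fixes m i :: nat
  assumes "0 < m"
  obtains J :: "'a::field_char_0 dpoly set"
  where "is_diff_ideal J" "dvar 0 ^ m \<in> J" "\<And>j. j \<le> (m - 1) * (i + 1) \<Longrightarrow> dvar i ^ j \<notin> J"
proof
  let ?F = "hankel_det (Suc i) ^ (m - 1) :: 'a dpoly"
  let ?N = "(m - 1) * (i + 1)"
  have "dlower ?F = 0"
  proof (cases "m - 1")
    case (Suc k)
    then show ?thesis
      by (simp only: Suc dlower_def mon_derivation_power dlower_hankel_det[unfolded dlower_def] mult_zero_right)
  qed (simp add: dlower_def)
  then show diff: "is_diff_ideal (apolar_ideal ?F)" by (rule is_diff_ideal_apolar_ideal)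
  show "dvar 0 ^ m \<in> apolar_ideal ?F"
  proof (rule x0_power_in_apolar_ideal)
    fix e assume "e \<in> Poly_Mapping.keys ?F"
    then have "Poly_Mapping.lookup e 0 \<le> (m - 1) * 1"
      by (rule keys_power_lookup_le[rotated]) (rule keys_hankel_det)
    with assms show "Poly_Mapping.lookup e 0 < m" by simp
  qed
  have "Poly_Mapping.lookup ?F (Poly_Mapping.single i ((m - 1) * Suc i))
      = Poly_Mapping.lookup (hankel_det (Suc i) :: 'a dpoly) (Poly_Mapping.single i (Suc i)) ^ (m - 1)"
    by (rule lookup_power_pure) (rule keys_hankel_det(2))
  then have not_N: "dvar i ^ ?N \<notin> apolar_ideal ?F"
    by (intro pure_power_notin_apolar_ideal) (simp add: lookup_hankel_det_pure)
  fix j assume "j \<le> ?N"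
  show "dvar i ^ j \<notin> apolar_ideal ?F"
  proof
    assume "dvar i ^ j \<in> apolar_ideal ?F"
    then have "dvar i ^ (?N - j) * dvar i ^ j \<in> apolar_ideal ?F"
      by (rule diff_ideal_mult[OF diff])
    with \<open>j \<le> ?N\<close> not_N show False by (simp flip: power_add)
  qed
qed

theorem theorem3:
  fixes m i :: nat
  assumes "0 < m"
  shows "0 < (i + 1) * m - i
       \<and> (dvar i :: 'a::field_char_0 dpoly) ^ ((i + 1) * m - i) \<in> diff_ideal_gen {dvar 0 ^ m}
       \<and> (\<forall>j::nat. 0 < j \<and> j < (i + 1) * m - i \<longrightarrow>
            (dvar i :: 'a dpoly) ^ j \<notin> diff_ideal_gen {dvar 0 ^ m})"
proof (intro conjI allI impI)
  have N: "(i + 1) * m - i = Suc ((m - 1) * (i + 1))"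
    using assms by (cases m) (simp_all add: algebra_simps)
  show "0 < (i + 1) * m - i" unfolding N by simp
  show "(dvar i :: 'a dpoly) ^ ((i + 1) * m - i) \<in> diff_ideal_gen {dvar 0 ^ m}"
    unfolding diff_ideal_gen_def using pure_power_in_diff_ideal[OF _ _ assms] by blast
  fix j :: nat assume "0 < j \<and> j < (i + 1) * m - i"
  then have "j \<le> (m - 1) * (i + 1)" unfolding N by simp
  obtain J :: "'a dpoly set" where "is_diff_ideal J" "dvar 0 ^ m \<in> J" "dvar i ^ j \<notin> J"
    using exists_diff_ideal_avoiding_pure_powers[OF assms, of i] \<open>j \<le> _\<close> by metis
  then show "(dvar i :: 'a dpoly) ^ j \<notin> diff_ideal_gen {dvar 0 ^ m}"
    unfolding diff_ideal_gen_def by blast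
qed

end
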